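(* Let $\mathcal M$ be a rank 3 acyclic oriented matroid with chirotope $\chi:E^3\to\{-1,0,1\}$ on $E=X\sqcup\{\omega\}$, where $\omega$ is not a coloop and is neither parallel nor antiparallel to any other element. Suppose there are distinct positive cocircuits $A,B$ of $\mathcal M$, neither containing $\omega$, such that $\chi(\omega,a,b)=1$ for all $a\in A\setminus B$ and $b\in B\setminus A$. Suppose $\mathcal M$ has a realization, i.e. vectors $\mathbf v_e=(x_e,y_e,z_e)^T\in\mathbb{R}^3$, $e\in E$, with $\chi(e,f,g)=\operatorname{sign}\det(\mathbf v_e,\mathbf v_f,\mathbf v_g)$ for all $e,f,g\in E$. Then a realization $(\mathbf v_e)_{e\in E}$ of $\mathcal M$ can be chosen such that: (1) $\mathbf v_\omega=(0,0,1)^T$; (2) $x_a^2+y_a^2=1$ for all $a\in X$; (3)–(5) there are $\theta_a\in(0,180)$ (degrees) with $x_a=-\cos\theta_a$ and $y_a=-\sin\theta_a$ for each $a\in X$; (6) $z_a>0$ for each $a\in X$; (7) putting $r_a=z_a>0$, for all $a,b,c\in X$ with $\theta_a<\theta_b<\theta_c$ one has $r_a\sin(\theta_c-\theta_b)-r_b\sin(\theta_c-\theta_a)+r_c\sin(\theta_b-\theta_a)=0$, $>0$, or $<0$ according as $\chi(a,b,c)$ is $0$, $1$, or $-1$; (8) $(r_a,\theta_a)_{a\in X}$ are polar coordinates for the realization, i.e. the line with homogeneous coordinates $\mathbf v_a$ is $\{(p,q):p\cos\theta_a+q\sin\theta_a=r_a\}$.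
   Context: Standard oriented matroid terminology (chirotope, acyclic, cocircuit, coloop, parallel elements, realization) is used. Angles are in degrees. *)

theory Defs
  imports "HOL-Analysis.Analysis"
begin

text \<open>Rank 3 oriented matroids on a finite ground set E, given by a chirotope
  chi : E^3 -> {-1,0,1} (values outside E are irrelevant).  Chirotope axioms
  (B0), (B1), (B2'') of Bjoerner--Las Vergnas--Sturmfels--White--Ziegler, Def. 3.5.3, for r = 3.\<close>

definition chirotope3 :: "'a set \<Rightarrow> ('a \<Rightarrow> 'a \<Rightarrow> 'a \<Rightarrow> int) \<Rightarrow> bool" where
  "chirotope3 E chi \<longleftrightarrow>
     finite E \<and>
     (\<forall>x\<in>E. \<forall>y\<in>E. \<forall>z\<in>E. chi x y z \<in> {-1, 0, 1}) \<and>
     (\<exists>x\<in>E. \<exists>y\<in>E. \<exists>z\<in>E. chi x y z \<noteq> 0) \<and>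
     (\<forall>x\<in>E. \<forall>y\<in>E. \<forall>z\<in>E. chi y x z = - chi x y z \<and> chi x z y = - chi x y z) \<and>
     (\<forall>x1\<in>E. \<forall>x2\<in>E. \<forall>x3\<in>E. \<forall>x4\<in>E. \<forall>y1\<in>E. \<forall>y2\<in>E.
        (let S = {- chi x2 x3 x4 * chi x1 y1 y2, chi x1 x3 x4 * chi x2 y1 y2,
                  - chi x1 x2 x4 * chi x3 y1 y2, chi x1 x2 x3 * chi x4 y1 y2}
         in S = {0} \<or> {-1, 1} \<subseteq> S))"

definition sign_vec_on :: "'a set \<Rightarrow> ('a \<Rightarrow> int) \<Rightarrow> bool" where
  "sign_vec_on E X \<longleftrightarrow> (\<forall>e. (e \<notin> E \<longrightarrow> X e = 0) \<and> X e \<in> {-1, 0, 1})"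

definition supp :: "('a \<Rightarrow> int) \<Rightarrow> 'a set" where
  "supp X = {e. X e \<noteq> 0}"

definition cocircuit :: "'a set \<Rightarrow> ('a \<Rightarrow> 'a \<Rightarrow> 'a \<Rightarrow> int) \<Rightarrow> ('a \<Rightarrow> int) \<Rightarrow> bool" where
  "cocircuit E chi D \<longleftrightarrow>
     (\<exists>y1\<in>E. \<exists>y2\<in>E. \<exists>s\<in>{-1, 1::int}. (\<exists>e\<in>E. chi y1 y2 e \<noteq> 0) \<and>
        D = (\<lambda>e. if e \<in> E then s * chi y1 y2 e else 0))"

definition orth :: "'a set \<Rightarrow> ('a \<Rightarrow> int) \<Rightarrow> ('a \<Rightarrow> int) \<Rightarrow> bool" where
  "orth E X Y \<longleftrightarrow> (\<forall>e\<in>E. X e * Y e = 0) \<or>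
      ((\<exists>e\<in>E. X e * Y e = 1) \<and> (\<exists>f\<in>E. X f * Y f = -1))"

definition om_vector :: "'a set \<Rightarrow> ('a \<Rightarrow> 'a \<Rightarrow> 'a \<Rightarrow> int) \<Rightarrow> ('a \<Rightarrow> int) \<Rightarrow> bool" where
  "om_vector E chi X \<longleftrightarrow> sign_vec_on E X \<and> (\<forall>D. cocircuit E chi D \<longrightarrow> orth E X D)"

definition circuit :: "'a set \<Rightarrow> ('a \<Rightarrow> 'a \<Rightarrow> 'a \<Rightarrow> int) \<Rightarrow> ('a \<Rightarrow> int) \<Rightarrow> bool" where
  "circuit E chi C \<longleftrightarrow> om_vector E chi C \<and> supp C \<noteq> {} \<and>
     (\<forall>Y. om_vector E chi Y \<and> supp Y \<noteq> {} \<and> supp Y \<subseteq> supp C \<longrightarrow> supp Y = supp C)"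

definition acyclic_om :: "'a set \<Rightarrow> ('a \<Rightarrow> 'a \<Rightarrow> 'a \<Rightarrow> int) \<Rightarrow> bool" where
  "acyclic_om E chi \<longleftrightarrow> \<not> (\<exists>C. circuit E chi C \<and> (\<forall>e. C e \<ge> 0))"

definition coloop :: "'a set \<Rightarrow> ('a \<Rightarrow> 'a \<Rightarrow> 'a \<Rightarrow> int) \<Rightarrow> 'a \<Rightarrow> bool" where
  "coloop E chi e \<longleftrightarrow> e \<in> E \<and>
     (\<forall>x\<in>E. \<forall>y\<in>E. \<forall>z\<in>E. chi x y z \<noteq> 0 \<longrightarrow> e \<in> {x, y, z})"

definition parallel :: "'a set \<Rightarrow> ('a \<Rightarrow> 'a \<Rightarrow> 'a \<Rightarrow> int) \<Rightarrow> 'a \<Rightarrow> 'a \<Rightarrow> bool" where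
  "parallel E chi e f \<longleftrightarrow> e \<noteq> f \<and>
     (\<exists>C. circuit E chi C \<and> supp C = {e, f} \<and> C e = - C f)"

definition antiparallel :: "'a set \<Rightarrow> ('a \<Rightarrow> 'a \<Rightarrow> 'a \<Rightarrow> int) \<Rightarrow> 'a \<Rightarrow> 'a \<Rightarrow> bool" where
  "antiparallel E chi e f \<longleftrightarrow> e \<noteq> f \<and>
     (\<exists>C. circuit E chi C \<and> supp C = {e, f} \<and> C e = C f)"

text \<open>A positive cocircuit, identified with its support A.\<close>

definition positive_cocircuit :: "'a set \<Rightarrow> ('a \<Rightarrow> 'a \<Rightarrow> 'a \<Rightarrow> int) \<Rightarrow> 'a set \<Rightarrow> bool" where
  "positive_cocircuit E chi A \<longleftrightarrow> cocircuit E chi (\<lambda>e. if e \<in> A then 1 else 0)"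

definition realizes :: "'a set \<Rightarrow> ('a \<Rightarrow> 'a \<Rightarrow> 'a \<Rightarrow> int) \<Rightarrow> ('a \<Rightarrow> real^3) \<Rightarrow> bool" where
  "realizes E chi v \<longleftrightarrow>
     (\<forall>e\<in>E. \<forall>f\<in>E. \<forall>g\<in>E.
        real_of_int (chi e f g) = sgn (det (vector [v e, v f, v g] :: real^3^3)))"

definition cosd :: "real \<Rightarrow> real" where "cosd t = cos (t * pi / 180)"
definition sind :: "real \<Rightarrow> real" where "sind t = sin (t * pi / 180)"

end

(*
  The positive cocircuits A and B are cut out by linear functionals \<phi>A, \<phi>B that vanish
  on v \<omega> and are nonnegative on all v a.  Their sum \<phi> is positive on every a \<in> X: an
  element outside A \<union> B would be orthogonal to both (independent) functionals, hence
  collinear with v \<omega>, i.e. parallel or antiparallel to \<omega>.  The linear map with rows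
  v \<omega> \<times> \<phi>, -\<phi> and v \<omega> + K \<phi> (K large) has positive determinant, sends v \<omega> to a positive
  multiple of (0,0,1) and every v a into the half-space of positive third coordinate with
  negative second coordinate.  Rescaling each vector by a positive factor preserves the
  chirotope and normalises (x_a, y_a) to a unit vector -(cos \<theta>_a, sin \<theta>_a) with
  0 < \<theta>_a < 180; condition (7) is then the expansion of det (v a, v b, v c).
*)

theory Submission
  imports Defs
begin

unbundle cross3_syntax

lemma det_rows_scaleR:
  "det (vector [x *\<^sub>R a, y *\<^sub>R b, z *\<^sub>R c] :: real^3^3) = x * y * z * det (vector [a, b, c] :: real^3^3)"
  by (simp add: det_3 algebra_simps)

lemma rows_matrix_vector_mult:
  fixes M :: "real^3^3"
  shows "(vector [M *v a, M *v b, M *v c] :: real^3^3) = vector [a, b, c] ** transpose M"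
  by (simp add: vec_eq_iff forall_3 matrix_matrix_mult_def matrix_vector_mult_def transpose_def
      sum_3 mult.commute)

lemma det_rows_matrix_vector_mult:
  fixes M :: "real^3^3"
  shows "det (vector [M *v a, M *v b, M *v c] :: real^3^3) = det M * det (vector [a, b, c] :: real^3^3)"
  by (simp add: rows_matrix_vector_mult det_mul det_transpose)

lemma det_scaleR_expansion:
  "det (vector [x, y, z] :: real^3^3) *\<^sub>R w = det (vector [y, z, w] :: real^3^3) *\<^sub>R x
     + det (vector [z, x, w] :: real^3^3) *\<^sub>R y + det (vector [x, y, w] :: real^3^3) *\<^sub>R z"
  by (simp add: det_3 vec_eq_iff forall_3 algebra_simps)

lemma cross_inner_eq_det: "(x \<times> y) \<bullet> z = det (vector [x, y, z] :: real^3^3)"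
  by (simp add: cross3_simps)

lemma orthogonal_to_pair_multiple_cross:
  fixes p q w :: "real^3"
  assumes "w \<bullet> p = 0" and "w \<bullet> q = 0"
  shows "((p \<times> q) \<bullet> (p \<times> q)) *\<^sub>R w = ((p \<times> q) \<bullet> w) *\<^sub>R (p \<times> q)"
proof -
  have "w \<times> (p \<times> q) = 0" using assms by (simp add: Lagrange)
  then show ?thesis using Lagrange[of "p \<times> q" w "p \<times> q"] by simp
qed

lemma realizes_chi_cases:
  assumes "realizes E chi v" and "e \<in> E" "f \<in> E" "g \<in> E"
  defines "d \<equiv> det (vector [v e, v f, v g] :: real^3^3)"
  shows "chi e f g = 1 \<longleftrightarrow> 0 < d" and "chi e f g = 0 \<longleftrightarrow> d = 0" and "chi e f g = -1 \<longleftrightarrow> d < 0"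
proof -
  have "real_of_int (chi e f g) = sgn d" using assms unfolding realizes_def by blast
  then show "chi e f g = 1 \<longleftrightarrow> 0 < d" "chi e f g = 0 \<longleftrightarrow> d = 0" "chi e f g = -1 \<longleftrightarrow> d < 0"
    by (auto simp: sgn_if split: if_splits)
qed

lemma realizes_linear_rescale:
  fixes M :: "real^3^3"
  assumes r: "realizes E chi v" and M: "0 < det M" and c: "\<forall>e\<in>E. 0 < c e"
  shows "realizes E chi (\<lambda>e. c e *\<^sub>R (M *v v e))"
  unfolding realizes_def
proof (intro ballI)
  fix e f g assume efg: "e \<in> E" "f \<in> E" "g \<in> E"
  have pos: "0 < c e * c f * c g * det M" using M c efg by simp
  have "det (vector [c e *\<^sub>R (M *v v e), c f *\<^sub>R (M *v v f), c g *\<^sub>R (M *v v g)] :: real^3^3)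
      = (c e * c f * c g * det M) * det (vector [v e, v f, v g] :: real^3^3)"
    by (simp add: det_rows_scaleR det_rows_matrix_vector_mult)
  then have "sgn (det (vector [c e *\<^sub>R (M *v v e), c f *\<^sub>R (M *v v f), c g *\<^sub>R (M *v v g)] :: real^3^3))
      = sgn (det (vector [v e, v f, v g] :: real^3^3))"
    using pos by (metis sgn_mult sgn_pos mult_1)
  then show "real_of_int (chi e f g)
      = sgn (det (vector [c e *\<^sub>R (M *v v e), c f *\<^sub>R (M *v v f), c g *\<^sub>R (M *v v g)] :: real^3^3))"
    using r efg unfolding realizes_def by simp
qed

lemma acyclic_realization_nonzero:
  assumes acyc: "acyclic_om E chi" and r: "realizes E chi v" and e: "e \<in> E"
  shows "v e \<noteq> 0"
proof
  assume z: "v e = 0"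
  define C where "C = (\<lambda>x. if x = e then 1 else 0::int)"
  have "D e = 0" if "cocircuit E chi D" for D
  proof -
    from that obtain y1 y2 s where y: "y1 \<in> E" "y2 \<in> E"
      and D: "D = (\<lambda>x. if x \<in> E then s * chi y1 y2 x else 0)"
      unfolding cocircuit_def by blast
    have "chi y1 y2 e = 0" using realizes_chi_cases(2)[OF r y e] z by (simp add: det_3)
    then show ?thesis using D e by simp
  qed
  then have "om_vector E chi C"
    unfolding om_vector_def sign_vec_on_def orth_def C_def using e by auto
  moreover have "supp C = {e}" unfolding supp_def C_def by auto
  ultimately have "circuit E chi C" unfolding circuit_def by auto
  moreover have "\<forall>x. C x \<ge> 0" unfolding C_def by auto
  ultimately show False using acyc unfolding acyclic_om_def by blast
qed

lemma realizes_exists_nonzero_det: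
  assumes om: "chirotope3 E chi" and r: "realizes E chi v" and w: "w \<noteq> 0"
  shows "\<exists>y1\<in>E. \<exists>y2\<in>E. det (vector [v y1, v y2, w] :: real^3^3) \<noteq> 0"
proof (rule ccontr)
  assume none: "\<not> ?thesis"
  from om obtain x y z where xyz: "x \<in> E" "y \<in> E" "z \<in> E" "chi x y z \<noteq> 0"
    unfolding chirotope3_def by blast
  have "det (vector [v x, v y, v z] :: real^3^3) \<noteq> 0"
    using realizes_chi_cases(2)[OF r xyz(1-3)] xyz(4) by simp
  moreover have "det (vector [v x, v y, v z] :: real^3^3) *\<^sub>R w = 0"
    using none xyz det_scaleR_expansion[of "v x" "v y" "v z" w] by simp
  ultimately show False using w by simp
qed

lemma om_vector_single_support_zero:
  assumes om: "chirotope3 E chi" and r: "realizes E chi v" and Y: "om_vector E chi Y"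
    and x: "x \<in> E" "v x \<noteq> 0" and other: "\<forall>y\<in>E. y \<noteq> x \<longrightarrow> Y y = 0"
  shows "Y x = 0"
proof (rule ccontr)
  assume nz: "Y x \<noteq> 0"
  obtain y1 y2 where y: "y1 \<in> E" "y2 \<in> E" and d: "det (vector [v y1, v y2, v x] :: real^3^3) \<noteq> 0"
    using realizes_exists_nonzero_det[OF om r x(2)] by blast
  have chi: "chi y1 y2 x \<noteq> 0" using realizes_chi_cases(2)[OF r y x(1)] d by simp
  define D where "D = (\<lambda>e. if e \<in> E then 1 * chi y1 y2 e else 0)"
  have "cocircuit E chi D" unfolding cocircuit_def D_def using y x chi by blast
  then have "orth E Y D" using Y unfolding om_vector_def by blast
  have at_x: "Y x * D x \<noteq> 0" using nz chi x unfolding D_def by simp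
  have off_x: "Y e * D e = 0" if "e \<in> E" "e \<noteq> x" for e using other that by simp
  from \<open>orth E Y D\<close> consider "\<forall>e\<in>E. Y e * D e = 0"
    | e g where "e \<in> E" "g \<in> E" "Y e * D e = 1" "Y g * D g = -1"
    unfolding orth_def by blast
  then show False
  proof cases
    case 1
    then show False using at_x x by blast
  next
    case 2
    then have "e = x" "g = x" using off_x by fastforce+
    then show False using 2 by simp
  qed
qed

lemma orth_opposite_pair:
  assumes "e \<in> E" "f \<in> E" and other: "\<forall>x\<in>E - {e, f}. X x * Y x = 0"
    and opp: "X e * Y e = - (X f * Y f)" and q: "X f * Y f \<in> {-1, 0, 1}"
  shows "orth E X Y"
proof (cases "X f * Y f = 0")
  case True
  then have "\<forall>x\<in>E. X x * Y x = 0" using other opp by (metis Diff_iff insertE neg_0_equal_iff_equal singletonD)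
  then show ?thesis unfolding orth_def by blast
next
  case False
  then have "X f * Y f = 1 \<and> X e * Y e = -1 \<or> X f * Y f = -1 \<and> X e * Y e = 1" using q opp by auto
  then show ?thesis unfolding orth_def using assms(1,2) by blast
qed

lemma om_vector_two_support_circuit:
  assumes om: "chirotope3 E chi" and r: "realizes E chi v" and C: "om_vector E chi C"
    and sC: "supp C = {e, f}" and ef: "e \<in> E" "f \<in> E" and v: "v e \<noteq> 0" "v f \<noteq> 0"
  shows "circuit E chi C"
proof -
  have "supp Y = supp C" if Y: "om_vector E chi Y" "supp Y \<noteq> {}" "supp Y \<subseteq> supp C" for Y
  proof -
    have off: "Y x = 0" if "x \<noteq> e" "x \<noteq> f" for x using Y(3) sC that unfolding supp_def by auto
    have "Y e \<noteq> 0"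
    proof
      assume "Y e = 0"
      then have "Y f = 0" using om_vector_single_support_zero[OF om r Y(1) ef(2) v(2)] off by metis
      then have "\<forall>x. Y x = 0" using \<open>Y e = 0\<close> off by metis
      then show False using Y(2) unfolding supp_def by simp
    qed
    moreover have "Y f \<noteq> 0"
    proof
      assume "Y f = 0"
      then have "Y e = 0" using om_vector_single_support_zero[OF om r Y(1) ef(1) v(1)] off by metis
      then show False using \<open>Y e \<noteq> 0\<close> by simp
    qed
    ultimately show ?thesis using Y(3) sC unfolding supp_def by auto
  qed
  then show ?thesis unfolding circuit_def using C sC by auto
qed

lemma realizes_multiple_parallel_or_antiparallel:
  assumes om: "chirotope3 E chi" and r: "realizes E chi v" and ef: "e \<in> E" "f \<in> E" "e \<noteq> f"
    and ve: "v e \<noteq> 0" and vf: "v f = l *\<^sub>R v e" and l: "l \<noteq> 0"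
  shows "parallel E chi e f \<or> antiparallel E chi e f"
proof -
  define \<sigma> where "\<sigma> = (if 0 < l then 1 else -1::int)"
  have \<sigma>: "sgn l = real_of_int \<sigma>" using l unfolding \<sigma>_def by (auto simp: sgn_if)
  \<comment> \<open>The sign vector of the linear dependency v f - l v e = 0.\<close>
  define C where "C = (\<lambda>x. if x = f then 1 else if x = e then - \<sigma> else 0)"
  have chi_f: "chi y1 y2 f = \<sigma> * chi y1 y2 e" if y: "y1 \<in> E" "y2 \<in> E" for y1 y2
  proof -
    have "det (vector [v y1, v y2, v f] :: real^3^3) = l * det (vector [v y1, v y2, v e] :: real^3^3)"
      using vf det_rows_scaleR[of 1 "v y1" 1 "v y2" l "v e"] by simp
    then have "real_of_int (chi y1 y2 f) = real_of_int (\<sigma> * chi y1 y2 e)"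
      using r y ef \<sigma> unfolding realizes_def by (simp add: sgn_mult)
    then show ?thesis by (rule of_int_eq_iff[THEN iffD1])
  qed
  have "orth E C D" if "cocircuit E chi D" for D
  proof -
    from that obtain y1 y2 s where y: "y1 \<in> E" "y2 \<in> E" and s: "s \<in> {-1, 1::int}"
      and D: "D = (\<lambda>x. if x \<in> E then s * chi y1 y2 x else 0)"
      unfolding cocircuit_def by blast
    have "chi y1 y2 e \<in> {-1, 0, 1}" using om y ef unfolding chirotope3_def by blast
    then have "C f * D f \<in> {-1, 0, 1}"
      using s ef chi_f[OF y] unfolding C_def D \<sigma>_def by auto
    moreover have "C e * D e = - (C f * D f)"
      using ef chi_f[OF y] unfolding C_def D by (simp add: algebra_simps)
    moreover have "\<forall>x\<in>E - {e, f}. C x * D x = 0" unfolding C_def by simp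
    ultimately show ?thesis using orth_opposite_pair[OF ef(1,2)] by blast
  qed
  moreover have "sign_vec_on E C" unfolding sign_vec_on_def C_def \<sigma>_def using ef by auto
  ultimately have "om_vector E chi C" unfolding om_vector_def by blast
  moreover have sC: "supp C = {e, f}" unfolding supp_def C_def \<sigma>_def using ef by auto
  moreover have "v f \<noteq> 0" using vf ve l by simp
  ultimately have "circuit E chi C" using om_vector_two_support_circuit[OF om r] ef ve by blast
  moreover have "if 0 < l then C e = - C f else C e = C f" unfolding C_def \<sigma>_def using ef by simp
  ultimately show ?thesis unfolding parallel_def antiparallel_def using sC ef by metis
qed

lemma positive_cocircuit_subset: "positive_cocircuit E chi P \<Longrightarrow> P \<subseteq> E"
  unfolding positive_cocircuit_def cocircuit_def by (auto dest!: fun_cong split: if_splits)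

lemma positive_cocircuit_nonempty: "positive_cocircuit E chi P \<Longrightarrow> P \<noteq> {}"
  unfolding positive_cocircuit_def cocircuit_def by (auto dest!: fun_cong split: if_splits)

lemma positive_cocircuit_functional:
  assumes r: "realizes E chi v" and P: "positive_cocircuit E chi P"
  shows "\<exists>\<phi>. \<forall>e\<in>E. (e \<in> P \<longrightarrow> 0 < \<phi> \<bullet> v e) \<and> (e \<notin> P \<longrightarrow> \<phi> \<bullet> v e = 0)"
proof -
  from P obtain y1 y2 s where y: "y1 \<in> E" "y2 \<in> E" and s: "s \<in> {-1, 1::int}"
    and eq: "(\<lambda>e. if e \<in> P then 1 else 0) = (\<lambda>e. if e \<in> E then s * chi y1 y2 e else 0)"
    unfolding positive_cocircuit_def cocircuit_def by blast
  define \<phi> where "\<phi> = of_int s *\<^sub>R (v y1 \<times> v y2)"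
  show ?thesis
  proof (intro exI ballI conjI impI)
    fix e assume e: "e \<in> E"
    have chi: "s * chi y1 y2 e = (if e \<in> P then 1 else 0)" using fun_cong[OF eq, of e] e by simp
    have \<phi>e: "\<phi> \<bullet> v e = of_int s * det (vector [v y1, v y2, v e] :: real^3^3)"
      unfolding \<phi>_def by (simp add: cross_inner_eq_det)
    note cases = realizes_chi_cases[OF r y e]
    show "0 < \<phi> \<bullet> v e" if "e \<in> P"
      using that s chi cases unfolding \<phi>e by (auto simp: zero_less_mult_iff mult_neg_neg)
    show "\<phi> \<bullet> v e = 0" if "e \<notin> P"
      using that s chi cases unfolding \<phi>e by auto
  qed
qed

lemma functionals_with_distinct_supports_independent:
  fixes \<phi>A \<phi>B :: "real^3"
  assumes A: "\<forall>e\<in>E. (e \<in> A \<longrightarrow> 0 < \<phi>A \<bullet> v e) \<and> (e \<notin> A \<longrightarrow> \<phi>A \<bullet> v e = 0)"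
    and B: "\<forall>e\<in>E. (e \<in> B \<longrightarrow> 0 < \<phi>B \<bullet> v e) \<and> (e \<notin> B \<longrightarrow> \<phi>B \<bullet> v e = 0)"
    and sub: "A \<subseteq> E" "B \<subseteq> E" and ne: "A \<noteq> {}" "B \<noteq> {}" and AB: "A \<noteq> B"
  shows "\<phi>A \<times> \<phi>B \<noteq> 0"
proof
  assume "\<phi>A \<times> \<phi>B = 0"
  then have eq: "(\<phi>A \<bullet> \<phi>A) *\<^sub>R \<phi>B = (\<phi>A \<bullet> \<phi>B) *\<^sub>R \<phi>A"
    using Lagrange[of \<phi>A \<phi>A \<phi>B] by simp
  have "\<phi>A \<noteq> 0" using A sub(1) ne(1) by fastforce
  define c where "c = (\<phi>A \<bullet> \<phi>B) / (\<phi>A \<bullet> \<phi>A)"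
  have c: "\<phi>B = c *\<^sub>R \<phi>A"
    using arg_cong[OF eq, of "scaleR (inverse (\<phi>A \<bullet> \<phi>A))"] \<open>\<phi>A \<noteq> 0\<close>
    by (simp add: c_def divide_inverse mult.commute)
  obtain f where f: "f \<in> B" using ne(2) by blast
  have "0 < c * (\<phi>A \<bullet> v f)" using B sub(2) f c by auto
  moreover have "0 \<le> \<phi>A \<bullet> v f" using A sub(2) f by (cases "f \<in> A") auto
  ultimately have c_pos: "0 < c" by (simp add: zero_less_mult_iff)
  have "e \<in> A \<longleftrightarrow> e \<in> B" if e: "e \<in> E" for e
  proof -
    have "e \<in> A \<longleftrightarrow> 0 < \<phi>A \<bullet> v e" using A e by auto
    also have "\<dots> \<longleftrightarrow> 0 < \<phi>B \<bullet> v e" using c c_pos by (simp add: zero_less_mult_iff)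
    also have "\<dots> \<longleftrightarrow> e \<in> B" using B e by auto
    finally show ?thesis .
  qed
  then show False using AB sub by blast
qed

lemma functional_positive_off_point:
  assumes om: "chirotope3 E chi" and acyc: "acyclic_om E chi" and r: "realizes E chi v"
    and \<omega>: "\<omega> \<in> E" and not_par: "\<forall>f\<in>E. \<not> parallel E chi \<omega> f \<and> \<not> antiparallel E chi \<omega> f"
    and A_cc: "positive_cocircuit E chi A" and B_cc: "positive_cocircuit E chi B"
    and AB: "A \<noteq> B" and omA: "\<omega> \<notin> A" and omB: "\<omega> \<notin> B"
  shows "\<exists>\<phi>. \<phi> \<bullet> v \<omega> = 0 \<and> (\<forall>a\<in>E - {\<omega>}. 0 < \<phi> \<bullet> v a)"
proof -
  obtain \<phi>A where \<phi>A: "\<forall>e\<in>E. (e \<in> A \<longrightarrow> 0 < \<phi>A \<bullet> v e) \<and> (e \<notin> A \<longrightarrow> \<phi>A \<bullet> v e = 0)"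
    using positive_cocircuit_functional[OF r A_cc] by blast
  obtain \<phi>B where \<phi>B: "\<forall>e\<in>E. (e \<in> B \<longrightarrow> 0 < \<phi>B \<bullet> v e) \<and> (e \<notin> B \<longrightarrow> \<phi>B \<bullet> v e = 0)"
    using positive_cocircuit_functional[OF r B_cc] by blast
  let ?n = "\<phi>A \<times> \<phi>B"
  have n: "?n \<noteq> 0"
    using functionals_with_distinct_supports_independent[OF \<phi>A \<phi>B] A_cc B_cc AB
      positive_cocircuit_subset positive_cocircuit_nonempty by blast
  have u: "v \<omega> \<bullet> \<phi>A = 0" "v \<omega> \<bullet> \<phi>B = 0" "v \<omega> \<noteq> 0"
    using \<phi>A \<phi>B \<omega> omA omB acyclic_realization_nonzero[OF acyc r \<omega>] by (simp_all add: inner_commute)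
  have "0 < (\<phi>A + \<phi>B) \<bullet> v a" if a: "a \<in> E - {\<omega>}" for a
  proof (cases "a \<in> A \<or> a \<in> B")
    case True
    have "0 \<le> \<phi>A \<bullet> v a" "0 \<le> \<phi>B \<bullet> v a"
      using \<phi>A \<phi>B a by (cases "a \<in> A"; cases "a \<in> B"; auto)+
    then show ?thesis using True \<phi>A \<phi>B a by (auto simp: inner_add_left)
  next
    case False
    \<comment> \<open>Then v a and v \<omega> both lie on the line orthogonal to \<phi>A and \<phi>B.\<close>
    then have "v a \<bullet> \<phi>A = 0" "v a \<bullet> \<phi>B = 0" using \<phi>A \<phi>B a by (simp_all add: inner_commute)
    then have va: "(?n \<bullet> ?n) *\<^sub>R v a = (?n \<bullet> v a) *\<^sub>R ?n"
      by (rule orthogonal_to_pair_multiple_cross)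
    have vw: "(?n \<bullet> ?n) *\<^sub>R v \<omega> = (?n \<bullet> v \<omega>) *\<^sub>R ?n"
      using u(1,2) by (rule orthogonal_to_pair_multiple_cross)
    have "v a \<noteq> 0" using acyclic_realization_nonzero[OF acyc r] a by blast
    then have nz: "?n \<bullet> v a \<noteq> 0" "?n \<bullet> v \<omega> \<noteq> 0" using va vw u(3) n by auto
    let ?l = "(?n \<bullet> v a) / (?n \<bullet> v \<omega>)"
    have "(?n \<bullet> ?n) *\<^sub>R (?l *\<^sub>R v \<omega>) = ?l *\<^sub>R ((?n \<bullet> ?n) *\<^sub>R v \<omega>)"
      by (rule scaleR_left_commute)
    also have "\<dots> = (?n \<bullet> ?n) *\<^sub>R v a" unfolding vw va using nz by simp
    finally have "v a = ?l *\<^sub>R v \<omega>" using n by (metis scaleR_cancel_left inner_eq_zero_iff)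
    moreover have "?l \<noteq> 0" using nz by simp
    ultimately have "parallel E chi \<omega> a \<or> antiparallel E chi \<omega> a"
      using realizes_multiple_parallel_or_antiparallel[OF om r \<omega>] a u(3) by blast
    then show ?thesis using not_par a by blast
  qed
  moreover have "(\<phi>A + \<phi>B) \<bullet> v \<omega> = 0" using u by (metis inner_add_right inner_commute add_0)
  ultimately show ?thesis by blast
qed

lemma exists_scale_dominating:
  fixes f g :: "'a \<Rightarrow> real"
  assumes "finite S" and "\<forall>a\<in>S. 0 < g a"
  shows "\<exists>K. \<forall>a\<in>S. f a < K * g a"
proof
  let ?K = "1 + (\<Sum>a\<in>S. \<bar>f a\<bar> / g a)"
  show "\<forall>a\<in>S. f a < ?K * g a"
  proof
    fix a assume a: "a \<in> S"
    have "\<bar>f a\<bar> / g a \<le> (\<Sum>a\<in>S. \<bar>f a\<bar> / g a)"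
      using assms by (intro member_le_sum[OF a]) auto
    moreover have "f a / g a \<le> \<bar>f a\<bar> / g a"
      using assms a by (intro divide_right_mono) auto
    ultimately have "f a / g a < ?K" by linarith
    then show "f a < ?K * g a" using assms a by (simp add: divide_less_eq)
  qed
qed

lemma normalized_realization:
  assumes r: "realizes E chi v0" and fin: "finite E" and \<omega>: "\<omega> \<in> E" and u0: "v0 \<omega> \<noteq> 0"
    and \<phi>0: "\<phi> \<noteq> 0" and \<phi>u: "\<phi> \<bullet> v0 \<omega> = 0" and pos: "\<forall>a\<in>E - {\<omega>}. 0 < \<phi> \<bullet> v0 a"
  shows "\<exists>v. realizes E chi v \<and> v \<omega> = vector [0, 0, 1] \<and>
    (\<forall>a\<in>E - {\<omega>}. (v a $ 1)\<^sup>2 + (v a $ 2)\<^sup>2 = 1 \<and> v a $ 2 < 0 \<and> 0 < v a $ 3)"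
proof -
  let ?u = "v0 \<omega>"
  obtain K where K: "\<forall>a\<in>E - {\<omega>}. - (?u \<bullet> v0 a) < K * (\<phi> \<bullet> v0 a)"
    using exists_scale_dominating[of "E - {\<omega>}" "\<lambda>a. \<phi> \<bullet> v0 a" "\<lambda>a. - (?u \<bullet> v0 a)"] fin pos
    by blast
  \<comment> \<open>The first two rows vanish on v0 \<omega>; K makes the third row positive on E - {\<omega>}.\<close>
  define M :: "real^3^3" where "M = vector [?u \<times> \<phi>, - \<phi>, ?u + K *\<^sub>R \<phi>]"
  define p where "p e = M *v v0 e" for e
  have p: "p e $ 1 = (?u \<times> \<phi>) \<bullet> v0 e" "p e $ 2 = - (\<phi> \<bullet> v0 e)"
    "p e $ 3 = ?u \<bullet> v0 e + K * (\<phi> \<bullet> v0 e)" for e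
    unfolding p_def M_def by (simp_all add: matrix_vector_mul_component inner_add_left)
  have "0 < det M"
  proof -
    have "det M = (?u \<times> \<phi>) \<bullet> (?u \<times> \<phi>)"
      unfolding M_def by (simp add: det_3 cross3_def inner_vec_def sum_3 algebra_simps)
    moreover have "(norm (?u \<times> \<phi>))\<^sup>2 = (norm ?u * norm \<phi>)\<^sup>2"
      using norm_cross_dot[of ?u \<phi>] \<phi>u by (simp add: inner_commute)
    then have "?u \<times> \<phi> \<noteq> 0" using u0 \<phi>0 by auto
    ultimately show ?thesis by simp
  qed
  define t where "t e = sqrt ((p e $ 1)\<^sup>2 + (p e $ 2)\<^sup>2)" for e
  define c where "c e = (if e = \<omega> then 1 / (?u \<bullet> ?u) else 1 / t e)" for e
  have t_pos: "0 < t a" if "a \<in> E - {\<omega>}" for a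
  proof -
    have "0 < \<phi> \<bullet> v0 a" using pos that by blast
    then have "0 < (p a $ 2)\<^sup>2" using p(2)[of a] by simp
    then show ?thesis unfolding t_def by (simp add: add_nonneg_pos)
  qed
  have "\<forall>e\<in>E. 0 < c e" unfolding c_def using u0 t_pos by simp
  then have "realizes E chi (\<lambda>e. c e *\<^sub>R p e)"
    unfolding p_def by (rule realizes_linear_rescale[OF r \<open>0 < det M\<close>])
  moreover have "c \<omega> *\<^sub>R p \<omega> = vector [0, 0, 1]"
    using u0 \<phi>u p[of \<omega>] dot_cross_self(1)[of ?u \<phi>]
    by (simp add: c_def vec_eq_iff forall_3 inner_commute)
  moreover have "((c a *\<^sub>R p a) $ 1)\<^sup>2 + ((c a *\<^sub>R p a) $ 2)\<^sup>2 = 1 \<and> (c a *\<^sub>R p a) $ 2 < 0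
      \<and> 0 < (c a *\<^sub>R p a) $ 3" if a: "a \<in> E - {\<omega>}" for a
  proof -
    have "(p a $ 1 / t a)\<^sup>2 + (p a $ 2 / t a)\<^sup>2 = ((p a $ 1)\<^sup>2 + (p a $ 2)\<^sup>2) / (t a)\<^sup>2"
      by (simp add: power_divide add_divide_distrib)
    also have "\<dots> = (t a)\<^sup>2 / (t a)\<^sup>2" unfolding t_def by simp
    also have "\<dots> = 1" using t_pos[OF a] by simp
    finally have "(p a $ 1 / t a)\<^sup>2 + (p a $ 2 / t a)\<^sup>2 = 1" .
    moreover have "0 < p a $ 3" using p(3)[of a] bspec[OF K a] by linarith
    ultimately show ?thesis using a t_pos[OF a] p(2)[of a] pos by (simp add: c_def divide_neg_pos)
  qed
  ultimately show ?thesis by blast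
qed

lemma sind_diff: "sind (a - b) = sind a * cosd b - cosd a * sind b"
  unfolding sind_def cosd_def by (simp add: left_diff_distrib diff_divide_distrib sin_diff)

lemma lower_unit_circle_angle:
  assumes unit: "x\<^sup>2 + y\<^sup>2 = 1" and y: "y < 0"
  shows "\<exists>\<theta>. 0 < \<theta> \<and> \<theta> < 180 \<and> x = - cosd \<theta> \<and> y = - sind \<theta>"
proof
  have "0 < y\<^sup>2" using y by simp
  then have "x\<^sup>2 < 1" using unit by linarith
  then have bounds: "-1 < - x" "- x < 1" by (auto simp: abs_square_less_1 abs_less_iff)
  let ?\<theta> = "arccos (- x) * 180 / pi"
  have rad: "?\<theta> * pi / 180 = arccos (- x)" by simp
  have "sind ?\<theta> = sqrt (1 - x\<^sup>2)" unfolding sind_def rad using bounds by (simp add: sin_arccos)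
  also have "\<dots> = - y" using unit y by (simp add: real_sqrt_unique flip: eq_diff_eq')
  finally have "y = - sind ?\<theta>" by simp
  moreover have "x = - cosd ?\<theta>" unfolding cosd_def rad using bounds by simp
  moreover have "0 < ?\<theta>" "?\<theta> < 180"
    using arccos_lt_bounded[OF bounds] by (simp_all add: divide_less_eq)
  ultimately show "0 < ?\<theta> \<and> ?\<theta> < 180 \<and> x = - cosd ?\<theta> \<and> y = - sind ?\<theta>" by blast
qed

lemma det_polar_rows:
  assumes "x $ 1 = - cosd \<alpha>" "x $ 2 = - sind \<alpha>" "y $ 1 = - cosd \<beta>" "y $ 2 = - sind \<beta>"
    "z $ 1 = - cosd \<gamma>" "z $ 2 = - sind \<gamma>"
  shows "x $ 3 * sind (\<gamma> - \<beta>) - y $ 3 * sind (\<gamma> - \<alpha>) + z $ 3 * sind (\<beta> - \<alpha>)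
     = det (vector [x, y, z] :: real^3^3)"
  using assms by (simp add: det_3 sind_diff algebra_simps)

theorem lemmal:
  fixes E X :: "'a set" and \<omega> :: 'a and chi :: "'a \<Rightarrow> 'a \<Rightarrow> 'a \<Rightarrow> int"
    and A B :: "'a set" and v0 :: "'a \<Rightarrow> real^3"
  assumes om: "chirotope3 E chi"
    and acyc: "acyclic_om E chi"
    and E_def: "E = insert \<omega> X" and omX: "\<omega> \<notin> X"
    and not_coloop: "\<not> coloop E chi \<omega>"
    and not_par: "\<forall>f\<in>E. \<not> parallel E chi \<omega> f \<and> \<not> antiparallel E chi \<omega> f"
    and A_cc: "positive_cocircuit E chi A" and B_cc: "positive_cocircuit E chi B"
    and AB: "A \<noteq> B" and omA: "\<omega> \<notin> A" and omB: "\<omega> \<notin> B"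
    and sep: "\<forall>a\<in>A - B. \<forall>b\<in>B - A. chi \<omega> a b = 1"
    and real0: "realizes E chi v0"
  shows "\<exists>v :: 'a \<Rightarrow> real^3. \<exists>\<theta> :: 'a \<Rightarrow> real.
     realizes E chi v \<and>
     v \<omega> = vector [0, 0, 1] \<and>
     (\<forall>a\<in>X. (v a $ 1)\<^sup>2 + (v a $ 2)\<^sup>2 = 1) \<and>
     (\<forall>a\<in>X. 0 < \<theta> a \<and> \<theta> a < 180 \<and> v a $ 1 = - cosd (\<theta> a) \<and> v a $ 2 = - sind (\<theta> a)) \<and>
     (\<forall>a\<in>X. v a $ 3 > 0) \<and>
     (\<forall>a\<in>X. \<forall>b\<in>X. \<forall>c\<in>X. \<theta> a < \<theta> b \<and> \<theta> b < \<theta> c \<longrightarrow>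
        (let s = v a $ 3 * sind (\<theta> c - \<theta> b) - v b $ 3 * sind (\<theta> c - \<theta> a)
                 + v c $ 3 * sind (\<theta> b - \<theta> a)
         in (chi a b c = 0 \<longrightarrow> s = 0) \<and> (chi a b c = 1 \<longrightarrow> s > 0) \<and> (chi a b c = -1 \<longrightarrow> s < 0))) \<and>
     (\<forall>a\<in>X. {(p, q). v a $ 1 * p + v a $ 2 * q + v a $ 3 = 0}
            = {(p, q). p * cosd (\<theta> a) + q * sind (\<theta> a) = v a $ 3})"
proof -
  have \<omega>: "\<omega> \<in> E" and X: "X = E - {\<omega>}" using E_def omX by auto
  obtain \<phi> where \<phi>\<omega>: "\<phi> \<bullet> v0 \<omega> = 0" and pos: "\<forall>a\<in>E - {\<omega>}. 0 < \<phi> \<bullet> v0 a"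
    using functional_positive_off_point[OF om acyc real0 \<omega> not_par A_cc B_cc AB omA omB] by blast
  obtain a0 where "a0 \<in> A" using positive_cocircuit_nonempty[OF A_cc] by blast
  then have "\<phi> \<noteq> 0" using pos positive_cocircuit_subset[OF A_cc] omA by fastforce
  moreover have "finite E" using om unfolding chirotope3_def by blast
  ultimately obtain v where v: "realizes E chi v" "v \<omega> = vector [0, 0, 1]"
    and vX: "\<forall>a\<in>X. (v a $ 1)\<^sup>2 + (v a $ 2)\<^sup>2 = 1 \<and> v a $ 2 < 0 \<and> 0 < v a $ 3"
    using normalized_realization[OF real0 _ \<omega> acyclic_realization_nonzero[OF acyc real0 \<omega>] _ \<phi>\<omega> pos] X
    by blast
  have "\<forall>a\<in>X. \<exists>t. 0 < t \<and> t < 180 \<and> v a $ 1 = - cosd t \<and> v a $ 2 = - sind t"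
    using vX lower_unit_circle_angle by blast
  then obtain \<theta> where \<theta>: "\<forall>a\<in>X. 0 < \<theta> a \<and> \<theta> a < 180 \<and> v a $ 1 = - cosd (\<theta> a) \<and> v a $ 2 = - sind (\<theta> a)"
    by (rule bchoice[THEN exE])
  have "let s = v a $ 3 * sind (\<theta> c - \<theta> b) - v b $ 3 * sind (\<theta> c - \<theta> a) + v c $ 3 * sind (\<theta> b - \<theta> a)
      in (chi a b c = 0 \<longrightarrow> s = 0) \<and> (chi a b c = 1 \<longrightarrow> s > 0) \<and> (chi a b c = -1 \<longrightarrow> s < 0)"
    if abc: "a \<in> X" "b \<in> X" "c \<in> X" for a b c
    using det_polar_rows[of "v a" "\<theta> a" "v b" "\<theta> b" "v c" "\<theta> c"] \<theta> abc
      realizes_chi_cases[OF v(1), of a b c] X unfolding Let_def by auto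
  moreover have "{(p, q). v a $ 1 * p + v a $ 2 * q + v a $ 3 = 0}
      = {(p, q). p * cosd (\<theta> a) + q * sind (\<theta> a) = v a $ 3}" if "a \<in> X" for a
    using \<theta> that by (auto simp: mult.commute)
  ultimately show ?thesis using v vX \<theta> by blast
qed

end
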